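(* Let $1\le p_1,p_2\le\infty$, $p_3\ge1$, $\phi\in L^1(\mathbb R)$ and $M\in\tilde{\mathcal M}_{(p_1,p_2,p_3)}(\mathbb R)$. Then $m(\xi,\eta)=M(\xi-\eta)\hat\phi(\xi+\eta)$ belongs to $\mathcal{BM}_{(p_1,p_2,p_3)}(\mathbb R)$ and $\|m\|_{p_1,p_2,p_3}\le\|\phi\|_1\|M\|_{p_1,p_2,p_3}$.
   Context: The Fourier transform is $\hat f(\xi)=\int_{\mathbb R}f(x)e^{-2\pi i x\xi}dx$. $\mathcal P(\mathbb R)$ denotes the set of Schwartz functions on $\mathbb R$ whose Fourier transform is continuous with compact support. For $1\le p_1,p_2\le\infty$, $0<p_3\le\infty$ and $m\in L^1_{loc}(\mathbb R^2)$, set, for $f,g\in\mathcal P(\mathbb R)$, $B_m(f,g)(x)=\int_{\mathbb R}\int_{\mathbb R}\hat f(\xi)\hat g(\eta)m(\xi,\eta)e^{2\pi i(\xi+\eta)x}d\xi\,d\eta$; $m\in\mathcal{BM}_{(p_1,p_2,p_3)}(\mathbb R)$ means $\|B_m(f,g)\|_{p_3}\le C\|f\|_{p_1}\|g\|_{p_2}$ for some $C$ and all $f,g\in\mathcal P(\mathbb R)$, and $\|m\|_{p_1,p_2,p_3}$ is the smallest such $C$. $\tilde{\mathcal M}_{(p_1,p_2,p_3)}(\mathbb R)$ is the set of measurable (locally integrable) $M:\mathbb R\to\mathbb C$ such that $(\xi,\eta)\mapsto M(\xi-\eta)$ belongs to $\mathcal{BM}_{(p_1,p_2,p_3)}(\mathbb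 R)$, and $\|M\|_{p_1,p_2,p_3}$ is the corresponding norm. *)

theory Defs
  imports "HOL-Analysis.Analysis"
begin

definition fourier :: "(real \<Rightarrow> complex) \<Rightarrow> real \<Rightarrow> complex" where
  "fourier f \<xi> = (LINT x|lebesgue. f x * cis (- 2 * pi * x * \<xi>))"

definition schwartz :: "(real \<Rightarrow> complex) \<Rightarrow> bool" where
  "schwartz f \<longleftrightarrow> (\<exists>D :: nat \<Rightarrow> real \<Rightarrow> complex.
      D 0 = f \<and>
      (\<forall>k x. (D k has_vector_derivative D (Suc k) x) (at x)) \<and>
      (\<forall>j k. bounded (range (\<lambda>x. complex_of_real (x ^ j) * D k x))))"

definition classP :: "(real \<Rightarrow> complex) set" where
  "classP = {f. schwartz f \<and> continuous_on UNIV (fourier f) \<and>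
                 compact (closure {\<xi>. fourier f \<xi> \<noteq> 0})}"

definition Lp_norm :: "ennreal \<Rightarrow> (real \<Rightarrow> complex) \<Rightarrow> ennreal" where
  "Lp_norm p f =
     (if p = \<infinity> then Inf {C. AE x in lebesgue. ennreal (norm (f x)) \<le> C}
      else (let I = (\<integral>\<^sup>+ x. ennreal (norm (f x) powr enn2real p) \<partial>lebesgue)
            in if I = \<infinity> then \<infinity> else ennreal (enn2real I powr (1 / enn2real p))))"

definition loc_int1 :: "(real \<Rightarrow> complex) \<Rightarrow> bool" where
  "loc_int1 M \<longleftrightarrow> M \<in> borel_measurable lebesgue \<and>
     (\<forall>K. compact K \<longrightarrow> set_integrable lebesgue K M)"

definition loc_int2 :: "(real \<times> real \<Rightarrow> complex) \<Rightarrow> bool" where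
  "loc_int2 m \<longleftrightarrow> m \<in> borel_measurable lebesgue \<and>
     (\<forall>K. compact K \<longrightarrow> set_integrable lebesgue K m)"

definition bilin_op :: "(real \<times> real \<Rightarrow> complex) \<Rightarrow> (real \<Rightarrow> complex) \<Rightarrow> (real \<Rightarrow> complex)
    \<Rightarrow> real \<Rightarrow> complex" where
  "bilin_op m f g x = (LINT \<eta>|lebesgue. LINT \<xi>|lebesgue.
      fourier f \<xi> * fourier g \<eta> * m (\<xi>, \<eta>) * cis (2 * pi * (\<xi> + \<eta>) * x))"

definition bm_bound :: "ennreal \<Rightarrow> ennreal \<Rightarrow> ennreal \<Rightarrow> (real \<times> real \<Rightarrow> complex) \<Rightarrow> real \<Rightarrow> bool" where
  "bm_bound p1 p2 p3 m C \<longleftrightarrow> (\<forall>f\<in>classP. \<forall>g\<in>classP.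
      Lp_norm p3 (bilin_op m f g) \<le> ennreal C * Lp_norm p1 f * Lp_norm p2 g)"

definition BM :: "ennreal \<Rightarrow> ennreal \<Rightarrow> ennreal \<Rightarrow> (real \<times> real \<Rightarrow> complex) set" where
  "BM p1 p2 p3 = {m. loc_int2 m \<and> (\<exists>C. bm_bound p1 p2 p3 m C)}"

definition bm_norm :: "ennreal \<Rightarrow> ennreal \<Rightarrow> ennreal \<Rightarrow> (real \<times> real \<Rightarrow> complex) \<Rightarrow> real" where
  "bm_norm p1 p2 p3 m = Inf {C. C \<ge> 0 \<and> bm_bound p1 p2 p3 m C}"

definition Mtilde :: "ennreal \<Rightarrow> ennreal \<Rightarrow> ennreal \<Rightarrow> (real \<Rightarrow> complex) set" where
  "Mtilde p1 p2 p3 = {M. loc_int1 M \<and> (\<lambda>(\<xi>, \<eta>). M (\<xi> - \<eta>)) \<in> BM p1 p2 p3}"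

definition mtilde_norm :: "ennreal \<Rightarrow> ennreal \<Rightarrow> ennreal \<Rightarrow> (real \<Rightarrow> complex) \<Rightarrow> real" where
  "mtilde_norm p1 p2 p3 M = bm_norm p1 p2 p3 (\<lambda>(\<xi>, \<eta>). M (\<xi> - \<eta>))"

end

theory Submission
  imports Defs
begin

text \<open>Write \<open>W(\<eta>, \<xi>) = hat f(\<xi>) hat g(\<eta>) m(\<xi>, \<eta>)\<close>.  Substituting
  \<open>hat \<phi>(\<xi> + \<eta>) = \<integral> \<phi>(y) e^(-2\<pi>iy(\<xi> + \<eta>)) dy\<close> into the double integral defining the
  bilinear operator of \<open>m(\<xi>, \<eta>) hat \<phi>(\<xi> + \<eta>)\<close> and applying Fubini turns it into the convolution
  \<open>\<phi> * B\<^sub>m(f, g)\<close>.  Since \<open>hat f\<close> and \<open>hat g\<close> are bounded with compact support and \<open>m\<close> is locally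
  integrable, \<open>W\<close> is integrable, hence \<open>B\<^sub>m(f, g)\<close> is bounded, and Young's inequality
  \<open>\<parallel>\<phi> * h\<parallel>\<^sub>p \<le> \<parallel>\<phi>\<parallel>\<^sub>1 \<parallel>h\<parallel>\<^sub>p\<close> for \<open>p \<ge> 1\<close> gives the bound.  The argument works for every \<open>m \<in> BM\<close>:
  neither the form \<open>M(\<xi> - \<eta>)\<close> nor the exponents \<open>p\<^sub>1, p\<^sub>2\<close> play a role.\<close>

section \<open>Young's inequality\<close>

lemma powr_ge_tangent:
  fixes q T x :: real
  assumes q: "1 \<le> q" and T: "0 < T" and x: "0 \<le> x"
  shows "T powr q + q * T powr (q - 1) * (x - T) \<le> x powr q"
proof (cases "x = 0")
  case True
  have "T powr q = T * T powr (q - 1)"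
    using T by (simp add: powr_mult_base)
  then have "T powr q + q * T powr (q - 1) * (0 - T) = (1 - q) * T powr q"
    by (simp add: algebra_simps)
  also have "\<dots> \<le> 0" using q by (simp add: mult_nonpos_nonneg)
  finally show ?thesis using True by simp
next
  case False
  have "q * T powr (q - 1) * (x - T) \<le> x powr q - T powr q"
  proof (rule convex_on_imp_above_tangent[where A="{0<..}"])
    show "convex_on {0<..} (\<lambda>x. x powr q)" using powr_convex[OF q] .
    show "((\<lambda>x. x powr q) has_field_derivative q * T powr (q - 1)) (at T within {0<..})"
      using has_real_derivative_powr[OF T] by (rule has_field_derivative_at_within)
  qed (use T x False in \<open>auto simp: interior_open\<close>)
  then show ?thesis by simp
qed

text \<open>Jensen's inequality for \<open>t \<mapsto> t powr q\<close>: integrate the tangent line at the weighted mean.\<close>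
lemma weighted_integral_powr_le:
  fixes a t :: "'a \<Rightarrow> real" and q :: real
  assumes q: "1 \<le> q" and a0: "\<And>y. 0 \<le> a y" and t0: "\<And>y. 0 \<le> t y"
    and ia: "integrable M a" and iat: "integrable M (\<lambda>y. a y * t y)"
    and iatq: "integrable M (\<lambda>y. a y * t y powr q)"
    and a_pos: "0 < integral\<^sup>L M a"
  shows "(\<integral>y. a y * t y \<partial>M) powr q \<le> (integral\<^sup>L M a) powr (q - 1) * (\<integral>y. a y * t y powr q \<partial>M)"
proof -
  define N where "N = integral\<^sup>L M a"
  define S where "S = (\<integral>y. a y * t y \<partial>M)"
  define T where "T = S / N"
  have S0: "0 \<le> S" unfolding S_def using a0 t0 by (intro integral_nonneg_AE) auto
  have R0: "0 \<le> (\<integral>y. a y * t y powr q \<partial>M)" using a0 t0 by (intro integral_nonneg_AE) auto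
  have "0 < N" using a_pos by (simp add: N_def)
  show ?thesis
  proof (cases "S = 0")
    case True
    then show ?thesis using q R0 S_def by simp
  next
    case False
    then have T: "0 < T" using S0 \<open>0 < N\<close> by (simp add: T_def)
    define c where "c = q * T powr (q - 1)"
    have "(T powr q - c * T) * N + c * S = (\<integral>y. a y * (T powr q + c * (t y - T)) \<partial>M)"
    proof -
      have "(\<lambda>y. a y * (T powr q + c * (t y - T))) = (\<lambda>y. (T powr q - c * T) * a y + c * (a y * t y))"
        by (auto simp: algebra_simps)
      then show ?thesis using ia iat by (simp add: N_def S_def)
    qed
    also have "\<dots> \<le> (\<integral>y. a y * t y powr q \<partial>M)"
    proof (rule integral_mono)
      show "integrable M (\<lambda>y. a y * (T powr q + c * (t y - T)))"
        using ia iat by (simp add: algebra_simps)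
      fix y show "a y * (T powr q + c * (t y - T)) \<le> a y * t y powr q"
        using powr_ge_tangent[OF q T t0[of y]] a0[of y] by (intro mult_left_mono) (auto simp: c_def)
    qed fact
    finally have key: "T powr q * N \<le> (\<integral>y. a y * t y powr q \<partial>M)"
      using \<open>0 < N\<close> by (simp add: T_def algebra_simps)
    have "S powr q = (T * N) powr q" using \<open>0 < N\<close> by (simp add: T_def)
    also have "\<dots> = N powr (q - 1) * (T powr q * N)"
      using \<open>0 < N\<close> T by (simp add: powr_mult powr_mult_base mult_ac)
    also have "\<dots> \<le> N powr (q - 1) * (\<integral>y. a y * t y powr q \<partial>M)"
      using key by (intro mult_left_mono) auto
    finally show ?thesis by (simp add: S_def N_def)
  qed
qed

lemma Lp_norm_top_le:
  assumes "\<And>x. ennreal (norm (f x)) \<le> C"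
  shows "Lp_norm \<infinity> f \<le> C"
  using assms by (auto simp: Lp_norm_def intro!: Inf_lower)

lemma AE_le_Lp_norm_top: "AE x in lebesgue. ennreal (norm (f x)) \<le> Lp_norm \<infinity> f"
proof -
  define S where "S = {C. AE x in lebesgue. ennreal (norm (f x)) \<le> C}"
  have "top \<in> S" by (simp add: S_def)
  then obtain c :: "nat \<Rightarrow> ennreal" where c: "range c \<subseteq> S" "Inf S = (INF i. c i)"
    using ennreal_Inf_countable_INF[of S] by blast
  have "AE x in lebesgue. \<forall>i. ennreal (norm (f x)) \<le> c i"
    using c(1) unfolding AE_all_countable S_def by auto
  then show ?thesis
    by eventually_elim (auto simp: Lp_norm_def S_def[symmetric] c(2) intro: INF_greatest)
qed

lemma Lp_norm_le_of_nn_integral_powr_le: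
  fixes k h :: "real \<Rightarrow> complex" and p :: ennreal and N :: real
  assumes p: "1 \<le> p" "p \<noteq> \<infinity>" and N: "0 \<le> N"
    and le: "(\<integral>\<^sup>+x. ennreal (norm (k x) powr enn2real p) \<partial>lebesgue)
      \<le> ennreal (N powr enn2real p) * (\<integral>\<^sup>+x. ennreal (norm (h x) powr enn2real p) \<partial>lebesgue)"
  shows "Lp_norm p k \<le> ennreal N * Lp_norm p h"
proof -
  define q where "q = enn2real p"
  define Ik where "Ik = (\<integral>\<^sup>+x. ennreal (norm (k x) powr q) \<partial>lebesgue)"
  define Ih where "Ih = (\<integral>\<^sup>+x. ennreal (norm (h x) powr q) \<partial>lebesgue)"
  have q: "1 \<le> q" using enn2real_mono[OF p(1)] p(2) by (simp add: q_def top.not_eq_extremum)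
  have Lk: "Lp_norm p k = (if Ik = \<infinity> then \<infinity> else ennreal (enn2real Ik powr (1 / q)))"
    and Lh: "Lp_norm p h = (if Ih = \<infinity> then \<infinity> else ennreal (enn2real Ih powr (1 / q)))"
    using p(2) by (simp_all add: Lp_norm_def Ik_def Ih_def q_def Let_def)
  have le': "Ik \<le> ennreal (N powr q) * Ih" using le by (simp add: Ik_def Ih_def q_def)
  show ?thesis
  proof (cases "Ih = \<infinity>")
    case True
    show ?thesis
    proof (cases "N = 0")
      case True
      then have "Ik = 0" using le' \<open>Ih = \<infinity>\<close> by simp
      then show ?thesis using Lk by simp
    qed (use True Lh N in \<open>simp add: ennreal_mult_top\<close>)
  next
    case False
    have IkF: "Ik \<noteq> \<infinity>"
      using le' False by (auto simp: ennreal_mult_eq_top_iff top_unique)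
    have "enn2real Ik \<le> enn2real (ennreal (N powr q) * Ih)"
      using le' False by (intro enn2real_mono) (auto simp: ennreal_mult_less_top less_top)
    also have "\<dots> = N powr q * enn2real Ih" by (simp add: enn2real_mult)
    finally have "enn2real Ik powr (1 / q) \<le> (N powr q * enn2real Ih) powr (1 / q)"
      using q by (intro powr_mono2) auto
    also have "\<dots> = N * enn2real Ih powr (1 / q)"
      using N q by (simp add: powr_mult powr_powr)
    finally have "ennreal (enn2real Ik powr (1 / q)) \<le> ennreal N * ennreal (enn2real Ih powr (1 / q))"
      using N by (simp add: ennreal_mult[symmetric] ennreal_leI)
    then show ?thesis using Lh Lk IkF False by simp
  qed
qed

lemma integrable_convolution_norm:
  fixes \<phi> h :: "real \<Rightarrow> complex"
  assumes \<phi>: "integrable lborel \<phi>" and h[measurable]: "h \<in> borel_measurable borel"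
    and hb: "\<And>x. norm (h x) \<le> H"
  shows "integrable lborel (\<lambda>y. norm (\<phi> y) * norm (h (x - y)))"
proof (rule Bochner_Integration.integrable_bound)
  show "integrable lborel (\<lambda>y. norm (\<phi> y) * H)" using \<phi> by simp
  have "0 \<le> H" using hb[of 0] norm_ge_zero order_trans by blast
  then show "AE y in lborel. norm (norm (\<phi> y) * norm (h (x - y))) \<le> norm (norm (\<phi> y) * H)"
    by (auto intro!: AE_I2 mult_left_mono hb)
qed (use \<phi> in measurable)

lemma norm_convolution_le:
  fixes \<phi> h :: "real \<Rightarrow> complex"
  shows "norm (\<integral>y. \<phi> y * h (x - y) \<partial>lborel) \<le> (\<integral>y. norm (\<phi> y) * norm (h (x - y)) \<partial>lborel)"
  using integral_norm_bound[of lborel "\<lambda>y. \<phi> y * h (x - y)"] by (simp add: norm_mult)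

lemma Lp_norm_top_convolution_le:
  fixes \<phi> h :: "real \<Rightarrow> complex"
  assumes \<phi>: "integrable lborel \<phi>" and h[measurable]: "h \<in> borel_measurable borel"
    and hb: "\<And>x. norm (h x) \<le> H"
  shows "Lp_norm \<infinity> (\<lambda>x. \<integral>y. \<phi> y * h (x - y) \<partial>lborel)
          \<le> ennreal (\<integral>y. norm (\<phi> y) \<partial>lborel) * Lp_norm \<infinity> h"
proof (rule Lp_norm_top_le)
  fix x
  have "AE y in lborel. ennreal (norm (h (x + (-1) * y))) \<le> Lp_norm \<infinity> h"
    using AE_le_Lp_norm_top[of h] by (intro AE_borel_affine) (auto simp: AE_completion_iff)
  then have ae: "AE y in lborel. ennreal (norm (\<phi> y) * norm (h (x - y))) \<le> ennreal (norm (\<phi> y)) * Lp_norm \<infinity> h"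
    by eventually_elim (auto simp: ennreal_mult intro!: mult_left_mono)
  have "ennreal (norm (\<integral>y. \<phi> y * h (x - y) \<partial>lborel)) \<le> ennreal (\<integral>y. norm (\<phi> y) * norm (h (x - y)) \<partial>lborel)"
    by (rule ennreal_leI[OF norm_convolution_le])
  also have "\<dots> = (\<integral>\<^sup>+y. ennreal (norm (\<phi> y) * norm (h (x - y))) \<partial>lborel)"
    by (rule nn_integral_eq_integral[symmetric, OF integrable_convolution_norm[OF \<phi> h hb]]) auto
  also have "\<dots> \<le> (\<integral>\<^sup>+y. ennreal (norm (\<phi> y)) * Lp_norm \<infinity> h \<partial>lborel)"
    using ae by (rule nn_integral_mono_AE)
  also have "\<dots> = ennreal (\<integral>y. norm (\<phi> y) \<partial>lborel) * Lp_norm \<infinity> h"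
    using \<phi> by (subst nn_integral_multc) (auto simp: nn_integral_eq_integral)
  finally show "ennreal (norm (\<integral>y. \<phi> y * h (x - y) \<partial>lborel)) \<le> \<dots>" .
qed

text \<open>Pointwise Jensen with weight \<open>|\<phi>|\<close>, then Tonelli and translation invariance.\<close>
lemma nn_integral_convolution_powr_le:
  fixes \<phi> h :: "real \<Rightarrow> complex" and q :: real
  assumes \<phi>[measurable]: "integrable lborel \<phi>" and h[measurable]: "h \<in> borel_measurable borel"
    and hb: "\<And>x. norm (h x) \<le> H" and q: "1 \<le> q"
  defines "N \<equiv> \<integral>y. norm (\<phi> y) \<partial>lborel"
  shows "(\<integral>\<^sup>+x. ennreal (norm (\<integral>y. \<phi> y * h (x - y) \<partial>lborel) powr q) \<partial>lborel)
          \<le> ennreal (N powr q) * (\<integral>\<^sup>+x. ennreal (norm (h x) powr q) \<partial>lborel)"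
proof (cases "N = 0")
  case True
  have "norm (\<integral>y. \<phi> y * h (x - y) \<partial>lborel) = 0" for x
  proof -
    have "AE y in lborel. \<phi> y = 0"
      using True \<phi> by (simp add: N_def integral_nonneg_eq_0_iff_AE)
    then show ?thesis by (subst integral_cong_AE[where g = "\<lambda>_. 0"]) (auto elim: eventually_mono)
  qed
  then show ?thesis using q by simp
next
  case False
  have Np: "0 < N" using False by (simp add: N_def order_less_le)
  have "0 \<le> H" using hb[of 0] norm_ge_zero order_trans by blast
  have pointwise: "ennreal (norm (\<integral>y. \<phi> y * h (x - y) \<partial>lborel) powr q) \<le> ennreal (N powr (q - 1)) *
             (\<integral>\<^sup>+y. ennreal (norm (\<phi> y) * norm (h (x - y)) powr q) \<partial>lborel)" for x
  proof -
    have iatq: "integrable lborel (\<lambda>y. norm (\<phi> y) * norm (h (x - y)) powr q)"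
      by (rule Bochner_Integration.integrable_bound[OF integrable_mult_right[OF integrable_norm[OF \<phi>], of "H powr q"]])
         (use \<phi> q \<open>0 \<le> H\<close> in \<open>auto simp: mult.commute intro!: mult_left_mono powr_mono2 hb\<close>)
    have "norm (\<integral>y. \<phi> y * h (x - y) \<partial>lborel) powr q \<le> (\<integral>y. norm (\<phi> y) * norm (h (x - y)) \<partial>lborel) powr q"
      using norm_convolution_le q by (intro powr_mono2) auto
    also have "\<dots> \<le> N powr (q - 1) * (\<integral>y. norm (\<phi> y) * norm (h (x - y)) powr q \<partial>lborel)"
      unfolding N_def
      by (rule weighted_integral_powr_le[OF q _ _ _ integrable_convolution_norm[OF \<phi> h hb] iatq])
         (use \<phi> Np in \<open>auto simp: N_def\<close>)
    finally show ?thesis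
      using iatq by (subst nn_integral_eq_integral) (auto simp: ennreal_mult[symmetric] intro!: ennreal_leI)
  qed
  have shift: "(\<integral>\<^sup>+x. ennreal (norm (h (x - y)) powr q) \<partial>lborel) = (\<integral>\<^sup>+x. ennreal (norm (h x) powr q) \<partial>lborel)" for y
    using nn_integral_real_affine[of "\<lambda>x. ennreal (norm (h x) powr q)" 1 "- y"] by simp
  have "(\<integral>\<^sup>+x. ennreal (norm (\<integral>y. \<phi> y * h (x - y) \<partial>lborel) powr q) \<partial>lborel)
      \<le> ennreal (N powr (q - 1)) *
         (\<integral>\<^sup>+x. (\<integral>\<^sup>+y. ennreal (norm (\<phi> y) * norm (h (x - y)) powr q) \<partial>lborel) \<partial>lborel)"
    by (subst nn_integral_cmult[symmetric]) (auto intro!: nn_integral_mono pointwise)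
  also have "(\<integral>\<^sup>+x. (\<integral>\<^sup>+y. ennreal (norm (\<phi> y) * norm (h (x - y)) powr q) \<partial>lborel) \<partial>lborel)
      = (\<integral>\<^sup>+y. (\<integral>\<^sup>+x. ennreal (norm (\<phi> y) * norm (h (x - y)) powr q) \<partial>lborel) \<partial>lborel)"
    by (rule lborel_pair.Fubini'[symmetric]) measurable
  also have "\<dots> = ennreal N * (\<integral>\<^sup>+x. ennreal (norm (h x) powr q) \<partial>lborel)"
    using \<phi> by (simp add: ennreal_mult nn_integral_cmult shift nn_integral_multc N_def nn_integral_eq_integral)
  also have "ennreal (N powr (q - 1)) * (ennreal N * (\<integral>\<^sup>+x. ennreal (norm (h x) powr q) \<partial>lborel))
      = ennreal (N powr q) * (\<integral>\<^sup>+x. ennreal (norm (h x) powr q) \<partial>lborel)"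
    using Np by (simp add: mult.assoc[symmetric] ennreal_mult'[symmetric] powr_mult_base mult.commute)
  finally show ?thesis .
qed

text \<open>\<open>h\<close> is assumed bounded so that the convolution integral exists at every point.\<close>
lemma Lp_norm_convolution_le:
  fixes \<phi> h :: "real \<Rightarrow> complex" and p :: ennreal
  assumes \<phi>: "integrable lborel \<phi>" and h: "h \<in> borel_measurable borel"
    and hb: "\<And>x. norm (h x) \<le> H" and p: "1 \<le> p"
  shows "Lp_norm p (\<lambda>x. \<integral>y. \<phi> y * h (x - y) \<partial>lborel)
          \<le> ennreal (\<integral>y. norm (\<phi> y) \<partial>lborel) * Lp_norm p h"
proof (cases "p = \<infinity>")
  case True
  then show ?thesis using Lp_norm_top_convolution_le[OF \<phi> h hb] by simp
next
  case False
  have "1 \<le> enn2real p" using enn2real_mono[OF p] False by (simp add: top.not_eq_extremum)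
  from nn_integral_convolution_powr_le[OF \<phi> h hb this] show ?thesis
    by (intro Lp_norm_le_of_nn_integral_powr_le[OF p False]) (simp_all add: nn_integral_completion)
qed

section \<open>Borel representatives of Lebesgue measurable functions\<close>

lemma completion_ex_borel_measurable_complex:
  fixes g :: "'a \<Rightarrow> complex"
  assumes "g \<in> borel_measurable (completion M)"
  shows "\<exists>g'\<in>borel_measurable M. AE x in M. g x = g' x"
proof -
  have "(\<lambda>x. Re (g x)) \<in> borel_measurable (completion M)"
    "(\<lambda>x. Im (g x)) \<in> borel_measurable (completion M)" using assms by measurable
  then obtain r i where r: "r \<in> borel_measurable M" "AE x in M. Re (g x) = r x"
    and i: "i \<in> borel_measurable M" "AE x in M. Im (g x) = i x"
    by (metis completion_ex_borel_measurable_real)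
  show ?thesis
  proof (intro bexI)
    show "AE x in M. g x = Complex (r x) (i x)"
      using r(2) i(2) by eventually_elim (simp add: complex_eq_iff)
    show "(\<lambda>x. Complex (r x) (i x)) \<in> borel_measurable M"
      using r(1) i(1) by (simp add: borel_measurable_complex_iff)
  qed
qed

lemma borel_measurable_completion_AE_eq:
  fixes f g :: "'a \<Rightarrow> 'b::topological_space"
  assumes g[measurable]: "g \<in> borel_measurable M" and ae: "AE x in M. f x = g x"
  shows "f \<in> borel_measurable (completion M)"
proof (rule measurableI)
  fix A :: "'b set" assume A[measurable]: "A \<in> sets borel"
  have [measurable]: "Measurable.pred (completion M) (\<lambda>x. f x \<noteq> g x)"
    "Measurable.pred (completion M) (\<lambda>x. f x \<noteq> g x \<and> f x \<in> A)"
    by (rule sets_completion_AE, use ae in auto)+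
  have [measurable]: "g \<in> borel_measurable (completion M)" by (rule measurable_completion[OF g])
  have "Measurable.pred (completion M) (\<lambda>x. (\<not> f x \<noteq> g x \<and> g x \<in> A) \<or> (f x \<noteq> g x \<and> f x \<in> A))"
    by measurable
  moreover have "(\<lambda>x. (\<not> f x \<noteq> g x \<and> g x \<in> A) \<or> (f x \<noteq> g x \<and> f x \<in> A)) = (\<lambda>x. f x \<in> A)"
    by auto
  ultimately have "Measurable.pred (completion M) (\<lambda>x. f x \<in> A)" by simp
  then show "f -` A \<inter> space (completion M) \<in> sets (completion M)"
    by (simp add: pred_def vimage_def Int_def conj_commute)
qed simp

lemma integral_completion_AE_eq:
  fixes f g :: "'a \<Rightarrow> 'b::{banach, second_countable_topology}"
  assumes g: "g \<in> borel_measurable M" and ae: "AE x in M. f x = g x"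
  shows "integral\<^sup>L (completion M) f = integral\<^sup>L M g"
proof -
  have "integral\<^sup>L (completion M) f = integral\<^sup>L (completion M) g"
    by (intro integral_cong_AE borel_measurable_completion_AE_eq[OF g ae] measurable_completion[OF g]
        AE_completion) (use ae in \<open>auto elim: eventually_mono\<close>)
  also have "\<dots> = integral\<^sup>L M g" by (rule integral_completion[OF g])
  finally show ?thesis .
qed

lemma integrable_completion_AE_eq:
  fixes f g :: "'a \<Rightarrow> 'b::{banach, second_countable_topology}"
  assumes f: "integrable (completion M) f" and g: "g \<in> borel_measurable M"
    and ae: "AE x in M. f x = g x"
  shows "integrable M g"
proof -
  have "integrable (completion M) g"
    by (rule integrable_cong_AE_imp[OF f measurable_completion[OF g] AE_completion[OF ae]])
  then show ?thesis by (simp add: integrable_completion[OF g])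
qed

lemma completion_integrable_ex_borel:
  fixes f :: "'a \<Rightarrow> complex"
  assumes "integrable (completion M) f"
  obtains g where "g \<in> borel_measurable M" and "integrable M g" and "AE x in M. f x = g x"
proof -
  have "f \<in> borel_measurable (completion M)" using assms by simp
  then obtain g where g: "g \<in> borel_measurable M" "AE x in M. f x = g x"
    using completion_ex_borel_measurable_complex by blast
  show thesis
    by (rule that[OF g(1) integrable_completion_AE_eq[OF assms g] g(2)])
qed

lemma iterated_integral_completion_AE_eq:
  fixes u v :: "real \<Rightarrow> real \<Rightarrow> complex"
  assumes v[measurable]: "(\<lambda>(\<eta>, \<xi>). v \<eta> \<xi>) \<in> borel_measurable (lborel \<Otimes>\<^sub>M lborel)"
    and ae: "AE \<eta> in lborel. AE \<xi> in lborel. u \<eta> \<xi> = v \<eta> \<xi>"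
  shows "(LINT \<eta>|lebesgue. LINT \<xi>|lebesgue. u \<eta> \<xi>) = (LINT \<eta>|lborel. LINT \<xi>|lborel. v \<eta> \<xi>)"
proof (rule integral_completion_AE_eq)
  show "(\<lambda>\<eta>. LINT \<xi>|lborel. v \<eta> \<xi>) \<in> borel_measurable lborel" by measurable
  have "v \<eta> \<in> borel_measurable lborel" for \<eta>
    using measurable_Pair2[OF v, of \<eta>] by simp
  then show "AE \<eta> in lborel. (LINT \<xi>|lebesgue. u \<eta> \<xi>) = (LINT \<xi>|lborel. v \<eta> \<xi>)"
    using ae by (auto elim!: eventually_mono intro: integral_completion_AE_eq)
qed

lemma AE_lborel_pair_iterated:
  fixes P :: "'a::euclidean_space \<times> 'b::euclidean_space \<Rightarrow> bool"
  assumes "AE p in lborel. P p"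
  shows "AE \<eta> in lborel. AE \<xi> in lborel. P (\<xi>, \<eta>)"
proof -
  obtain N where N: "N \<in> null_sets lborel" "{p. \<not> P p} \<subseteq> N"
    using assms unfolding eventually_ae_filter by auto
  have [measurable]: "N \<in> sets (lborel \<Otimes>\<^sub>M lborel)"
    by (subst lborel_prod) (rule null_setsD2[OF N(1)])
  have "AE p in lborel \<Otimes>\<^sub>M lborel. p \<notin> N"
    by (subst lborel_prod) (rule AE_not_in[OF N(1)])
  then have "AE \<xi> in lborel. AE \<eta> in lborel. (\<xi>, \<eta>) \<notin> N"
    by (rule lborel_pair.AE_pair)
  moreover have "{x \<in> space (lborel \<Otimes>\<^sub>M lborel). (fst x, snd x) \<notin> N} \<in> sets (lborel \<Otimes>\<^sub>M lborel)"
    by measurable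
  ultimately have "AE \<eta> in lborel. AE \<xi> in lborel. (\<xi>, \<eta>) \<notin> N"
    using lborel_pair.AE_commute[of "\<lambda>\<xi> \<eta>. (\<xi>, \<eta>) \<notin> N"] by simp
  then show ?thesis
    using N(2) by (auto elim!: eventually_mono)
qed

lemma loc_int2_ex_borel:
  fixes m :: "real \<times> real \<Rightarrow> complex"
  assumes m: "loc_int2 m"
  obtains mb where "mb \<in> borel_measurable borel" and "\<And>K. compact K \<Longrightarrow> set_integrable lborel K mb"
    and "AE \<eta> in lborel. AE \<xi> in lborel. m (\<xi>, \<eta>) = mb (\<xi>, \<eta>)"
proof -
  have "m \<in> borel_measurable (completion lborel)" using m by (simp add: loc_int2_def)
  then obtain mb where mbl: "mb \<in> borel_measurable lborel" and m_mb: "AE p in lborel. m p = mb p"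
    using completion_ex_borel_measurable_complex by blast
  have mb[measurable]: "mb \<in> borel_measurable borel" using mbl by simp
  show thesis
  proof (rule that)
    show "mb \<in> borel_measurable borel" by (rule mb)
    show "set_integrable lborel K mb" if K: "compact K" for K
      unfolding set_integrable_def
    proof (rule integrable_completion_AE_eq)
      show "integrable lebesgue (\<lambda>p. indicator K p *\<^sub>R m p)"
        using m K by (simp add: loc_int2_def set_integrable_def)
      have [measurable]: "K \<in> sets borel" using compact_imp_closed[OF K] by simp
      show "(\<lambda>p. indicator K p *\<^sub>R mb p) \<in> borel_measurable lborel" by measurable
      show "AE p in lborel. indicator K p *\<^sub>R m p = indicator K p *\<^sub>R mb p"
        using m_mb by eventually_elim simp
    qed
    show "AE \<eta> in lborel. AE \<xi> in lborel. m (\<xi>, \<eta>) = mb (\<xi>, \<eta>)"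
      using AE_lborel_pair_iterated[OF m_mb] by simp
  qed
qed

section \<open>Fourier transform\<close>

lemma borel_measurable_cis[measurable]: "cis \<in> borel_measurable borel"
  by (intro borel_measurable_continuous_onI continuous_intros)

lemma fourier_eq_lborel:
  assumes [measurable]: "\<phi> \<in> borel_measurable borel"
  shows "fourier \<phi> \<xi> = (LINT x|lborel. \<phi> x * cis (- 2 * pi * x * \<xi>))"
  unfolding fourier_def by (rule integral_completion) measurable

lemma fourier_cong_AE:
  assumes "AE x in lborel. \<phi> x = \<psi> x" and [measurable]: "\<psi> \<in> borel_measurable borel"
  shows "fourier \<phi> = fourier \<psi>"
proof
  fix \<xi>
  have "fourier \<phi> \<xi> = (LINT x|lborel. \<psi> x * cis (- 2 * pi * x * \<xi>))"
    unfolding fourier_def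
    by (rule integral_completion_AE_eq) (use assms(1) in \<open>auto elim: eventually_mono\<close>)
  then show "fourier \<phi> \<xi> = fourier \<psi> \<xi>" by (simp add: fourier_eq_lborel)
qed

lemma borel_measurable_fourier:
  assumes [measurable]: "\<phi> \<in> borel_measurable borel"
  shows "fourier \<phi> \<in> borel_measurable borel"
proof -
  have "fourier \<phi> = (\<lambda>\<xi>. LINT x|lborel. \<phi> x * cis (- 2 * pi * x * \<xi>))"
    using fourier_eq_lborel[OF assms] by blast
  also have "\<dots> \<in> borel_measurable borel" by measurable
  finally show ?thesis .
qed

lemma norm_fourier_le: "norm (fourier \<phi> \<xi>) \<le> (LINT x|lebesgue. norm (\<phi> x))"
  unfolding fourier_def using integral_norm_bound[of lebesgue "\<lambda>x. \<phi> x * cis (- 2 * pi * x * \<xi>)"]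
  by (simp add: norm_mult)

lemma classP_fourier_bounds:
  assumes "f \<in> classP"
  obtains R B where "\<And>\<xi>. fourier f \<xi> \<noteq> 0 \<Longrightarrow> \<bar>\<xi>\<bar> \<le> R" and "\<And>\<xi>. norm (fourier f \<xi>) \<le> B"
proof -
  define S where "S = closure {\<xi>. fourier f \<xi> \<noteq> 0}"
  have S: "compact S" and c: "continuous_on UNIV (fourier f)"
    using assms by (simp_all add: classP_def S_def)
  obtain R where R: "\<forall>\<xi>\<in>S. norm \<xi> \<le> R"
    using compact_imp_bounded[OF S] unfolding bounded_iff by blast
  have K: "compact (fourier f ` S)"
    by (rule compact_continuous_image[OF continuous_on_subset[OF c subset_UNIV] S])
  obtain B where B: "\<forall>y\<in>fourier f ` S. norm y \<le> B"
    using compact_imp_bounded[OF K] unfolding bounded_iff by blast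
  have inS: "\<xi> \<in> S" if "fourier f \<xi> \<noteq> 0" for \<xi>
    using that closure_subset[of "{\<xi>. fourier f \<xi> \<noteq> 0}"] unfolding S_def by auto
  show ?thesis
  proof
    show "\<bar>\<xi>\<bar> \<le> R" if "fourier f \<xi> \<noteq> 0" for \<xi>
      using R inS[OF that] by simp
    show "norm (fourier f \<xi>) \<le> max B 0" for \<xi>
      using B inS[of \<xi>] by (cases "fourier f \<xi> = 0") (auto simp: le_max_iff_disj)
  qed
qed

lemma borel_measurable_fourier_classP:
  "f \<in> classP \<Longrightarrow> fourier f \<in> borel_measurable borel"
  by (rule borel_measurable_continuous_onI) (simp add: classP_def)

section \<open>Bilinear multipliers\<close>

lemma borel_measurable_fst_plus_snd[measurable]:
  "(\<lambda>p::real \<times> real. fst p + snd p) \<in> borel_measurable borel"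
  by (intro borel_measurable_continuous_onI continuous_intros)

lemma integrable_fourier_tensor_multiplier:
  fixes m :: "real \<times> real \<Rightarrow> complex"
  assumes f: "f \<in> classP" and g: "g \<in> classP" and [measurable]: "m \<in> borel_measurable borel"
    and m_loc: "\<And>K. compact K \<Longrightarrow> set_integrable lborel K m"
  shows "integrable (lborel \<Otimes>\<^sub>M lborel) (\<lambda>(\<eta>, \<xi>). fourier f \<xi> * fourier g \<eta> * m (\<xi>, \<eta>))"
proof -
  have [measurable]: "fourier f \<in> borel_measurable borel" "fourier g \<in> borel_measurable borel"
    using f g by (simp_all add: borel_measurable_fourier_classP)
  obtain RF BF where RF: "\<And>\<xi>. fourier f \<xi> \<noteq> 0 \<Longrightarrow> \<bar>\<xi>\<bar> \<le> RF" and BF: "\<And>\<xi>. norm (fourier f \<xi>) \<le> BF"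
    using classP_fourier_bounds[OF f] by blast
  obtain RG BG where RG: "\<And>\<xi>. fourier g \<xi> \<noteq> 0 \<Longrightarrow> \<bar>\<xi>\<bar> \<le> RG" and BG: "\<And>\<xi>. norm (fourier g \<xi>) \<le> BG"
    using classP_fourier_bounds[OF g] by blast
  have "0 \<le> BF" "0 \<le> BG" using BF[of 0] BG[of 0] norm_ge_zero order_trans by blast+
  define R where "R = max RF RG"
  define K where "K = cbox (-R, -R) (R, R)"
  have "integrable lborel (\<lambda>p. indicator K p *\<^sub>R m p)"
    using m_loc[of K] by (simp add: K_def set_integrable_def)
  then have "integrable (lborel \<Otimes>\<^sub>M lborel) (\<lambda>(\<eta>, \<xi>). indicator K (\<xi>, \<eta>) *\<^sub>R m (\<xi>, \<eta>))"
    using lborel_pair.integrable_product_swap[of "\<lambda>p. indicator K p *\<^sub>R m p"] by (simp add: lborel_prod)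
  then show ?thesis
  proof (rule Bochner_Integration.integrable_bound[OF integrable_scaleR_right[where c="BF * BG"]])
    have "norm (fourier f \<xi> * fourier g \<eta> * m (\<xi>, \<eta>)) \<le> BF * BG * (indicator K (\<xi>, \<eta>) * norm (m (\<xi>, \<eta>)))" for \<eta> \<xi>
    proof (cases "fourier f \<xi> = 0 \<or> fourier g \<eta> = 0")
      case False
      then have "(\<xi>, \<eta>) \<in> K"
        using RF[of \<xi>] RG[of \<eta>] by (auto simp: K_def R_def cbox_Pair_iff abs_le_iff)
      moreover have "norm (fourier f \<xi>) * norm (fourier g \<eta>) \<le> BF * BG"
        using BF BG \<open>0 \<le> BF\<close> \<open>0 \<le> BG\<close> by (intro mult_mono) auto
      ultimately show ?thesis
        by (auto simp: norm_mult intro!: mult_right_mono)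
    qed (use \<open>0 \<le> BF\<close> \<open>0 \<le> BG\<close> in auto)
    then show "AE p in lborel \<Otimes>\<^sub>M lborel. norm ((\<lambda>(\<eta>, \<xi>). fourier f \<xi> * fourier g \<eta> * m (\<xi>, \<eta>)) p)
        \<le> norm ((BF * BG) *\<^sub>R (\<lambda>(\<eta>, \<xi>). indicator K (\<xi>, \<eta>) *\<^sub>R m (\<xi>, \<eta>)) p)"
      using \<open>0 \<le> BF\<close> \<open>0 \<le> BG\<close> by (intro AE_I2) (auto simp: split_beta mult.assoc abs_mult)
    show "(\<lambda>(\<eta>, \<xi>). fourier f \<xi> * fourier g \<eta> * m (\<xi>, \<eta>)) \<in> borel_measurable (lborel \<Otimes>\<^sub>M lborel)"
      by measurable
  qed
qed

lemma bilin_op_eq_lborel: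
  fixes m m' :: "real \<times> real \<Rightarrow> complex"
  assumes f: "f \<in> classP" and g: "g \<in> classP"
    and [measurable]: "m' \<in> borel_measurable borel"
    and ae: "AE \<eta> in lborel. AE \<xi> in lborel. m (\<xi>, \<eta>) = m' (\<xi>, \<eta>)"
  shows "bilin_op m f g x = (LINT \<eta>|lborel. LINT \<xi>|lborel.
           fourier f \<xi> * fourier g \<eta> * m' (\<xi>, \<eta>) * cis (2 * pi * (\<xi> + \<eta>) * x))"
  unfolding bilin_op_def
proof (rule iterated_integral_completion_AE_eq)
  have [measurable]: "fourier f \<in> borel_measurable borel" "fourier g \<in> borel_measurable borel"
    using f g by (simp_all add: borel_measurable_fourier_classP)
  show "(\<lambda>(\<eta>, \<xi>). fourier f \<xi> * fourier g \<eta> * m' (\<xi>, \<eta>) * cis (2 * pi * (\<xi> + \<eta>) * x))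
      \<in> borel_measurable (lborel \<Otimes>\<^sub>M lborel)"
    by measurable
qed (use ae in \<open>auto elim!: eventually_mono\<close>)

lemma integral_modulated_eq_convolution:
  fixes \<phi> w :: "real \<Rightarrow> complex"
  assumes \<phi>[measurable]: "\<phi> \<in> borel_measurable borel" and \<phi>i: "integrable lborel \<phi>"
    and w: "integrable lborel w"
  shows "(LINT \<xi>|lborel. w \<xi> * fourier \<phi> (\<xi> + \<eta>) * cis (2 * pi * (\<xi> + \<eta>) * x))
       = (LINT y|lborel. \<phi> y * (LINT \<xi>|lborel. w \<xi> * cis (2 * pi * (\<xi> + \<eta>) * (x - y))))"
proof -
  have [measurable]: "w \<in> borel_measurable borel"
    using borel_measurable_integrable[OF w] by simp
  define Q where "Q \<xi> y = \<phi> y * (w \<xi> * cis (2 * pi * (\<xi> + \<eta>) * (x - y)))" for \<xi> y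
  have Q_eq: "Q \<xi> y = (w \<xi> * cis (2 * pi * (\<xi> + \<eta>) * x)) * (\<phi> y * cis (- 2 * pi * y * (\<xi> + \<eta>)))" for \<xi> y
    unfolding Q_def by (simp add: cis_mult algebra_simps)
  have norm_Q: "norm (Q \<xi> y) = norm (w \<xi>) * norm (\<phi> y)" for \<xi> y
    by (simp add: Q_def norm_mult)
  have "integrable (lborel \<Otimes>\<^sub>M lborel) (\<lambda>(\<xi>, y). Q \<xi> y)"
  proof (rule lborel_pair.Fubini_integrable)
    show "(\<lambda>(\<xi>, y). Q \<xi> y) \<in> borel_measurable (lborel \<Otimes>\<^sub>M lborel)"
      unfolding Q_def by measurable
    show "integrable lborel (\<lambda>\<xi>. LINT y|lborel. norm ((\<lambda>(\<xi>, y). Q \<xi> y) (\<xi>, y)))"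
      using w by (simp add: norm_Q)
    have "integrable lborel (\<lambda>y. \<phi> y * cis (- 2 * pi * y * t))" for t
      by (rule Bochner_Integration.integrable_bound[OF integrable_norm[OF \<phi>i]]) (auto simp: norm_mult)
    then have "integrable lborel (Q \<xi>)" for \<xi>
      unfolding Q_eq by (rule integrable_mult_right)
    then show "AE \<xi> in lborel. integrable lborel (\<lambda>y. (\<lambda>(\<xi>, y). Q \<xi> y) (\<xi>, y))"
      by simp
  qed
  then have "(LINT \<xi>|lborel. LINT y|lborel. Q \<xi> y) = (LINT y|lborel. LINT \<xi>|lborel. Q \<xi> y)"
    using lborel_pair.Fubini_integral by force
  moreover have "(LINT y|lborel. Q \<xi> y) = w \<xi> * fourier \<phi> (\<xi> + \<eta>) * cis (2 * pi * (\<xi> + \<eta>) * x)" for \<xi>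
    unfolding Q_eq integral_mult_right_zero fourier_eq_lborel[OF \<phi>] by (simp add: mult_ac)
  moreover have "(LINT \<xi>|lborel. Q \<xi> y) = \<phi> y * (LINT \<xi>|lborel. w \<xi> * cis (2 * pi * (\<xi> + \<eta>) * (x - y)))" for y
    unfolding Q_def by simp
  ultimately show ?thesis by simp
qed

lemma norm_integral_modulated_le:
  fixes w :: "real \<Rightarrow> complex"
  shows "norm (LINT \<xi>|lborel. w \<xi> * cis (2 * pi * (\<xi> + \<eta>) * z)) \<le> (LINT \<xi>|lborel. norm (w \<xi>))"
  using integral_norm_bound[of lborel "\<lambda>\<xi>. w \<xi> * cis (2 * pi * (\<xi> + \<eta>) * z)"]
  by (simp add: norm_mult)

lemma
  fixes W :: "real \<Rightarrow> real \<Rightarrow> complex"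
  assumes Wi: "integrable (lborel \<Otimes>\<^sub>M lborel) (\<lambda>(\<eta>, \<xi>). W \<eta> \<xi>)"
  shows integrable_iterated_norm: "integrable lborel (\<lambda>\<eta>. LINT \<xi>|lborel. norm (W \<eta> \<xi>))"
    and norm_iterated_modulated_integral_le:
      "norm (LINT \<eta>|lborel. LINT \<xi>|lborel. W \<eta> \<xi> * cis (2 * pi * (\<xi> + \<eta>) * z))
        \<le> (LINT \<eta>|lborel. LINT \<xi>|lborel. norm (W \<eta> \<xi>))"
proof -
  have [measurable]: "(\<lambda>(\<eta>, \<xi>). W \<eta> \<xi>) \<in> borel_measurable (lborel \<Otimes>\<^sub>M lborel)"
    using Wi by auto
  show J: "integrable lborel (\<lambda>\<eta>. LINT \<xi>|lborel. norm (W \<eta> \<xi>))"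
    using lborel_pair.integrable_fst'[OF integrable_norm[OF Wi]] by (simp add: case_prod_beta)
  have "norm (LINT \<eta>|lborel. LINT \<xi>|lborel. W \<eta> \<xi> * cis (2 * pi * (\<xi> + \<eta>) * z))
      \<le> (LINT \<eta>|lborel. norm (LINT \<xi>|lborel. W \<eta> \<xi> * cis (2 * pi * (\<xi> + \<eta>) * z)))"
    by (rule integral_norm_bound)
  also have "\<dots> \<le> (LINT \<eta>|lborel. LINT \<xi>|lborel. norm (W \<eta> \<xi>))"
  proof (rule integral_mono[OF _ J norm_integral_modulated_le])
    show "integrable lborel (\<lambda>\<eta>. norm (LINT \<xi>|lborel. W \<eta> \<xi> * cis (2 * pi * (\<xi> + \<eta>) * z)))"
      by (rule Bochner_Integration.integrable_bound[OF J]) (auto intro!: AE_I2 norm_integral_modulated_le)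
  qed
  finally show "norm (LINT \<eta>|lborel. LINT \<xi>|lborel. W \<eta> \<xi> * cis (2 * pi * (\<xi> + \<eta>) * z))
        \<le> (LINT \<eta>|lborel. LINT \<xi>|lborel. norm (W \<eta> \<xi>))" .
qed

lemma integrable_pair_convolution:
  fixes \<phi> :: "real \<Rightarrow> complex" and k :: "real \<Rightarrow> real \<Rightarrow> complex"
  assumes \<phi>i: "integrable lborel \<phi>"
    and k[measurable]: "(\<lambda>(\<eta>, z). k \<eta> z) \<in> borel_measurable (lborel \<Otimes>\<^sub>M lborel)"
    and J: "integrable lborel J" and k_le: "\<And>\<eta> z. norm (k \<eta> z) \<le> J \<eta>"
  shows "integrable (lborel \<Otimes>\<^sub>M lborel) (\<lambda>(\<eta>, y). \<phi> y * k \<eta> (x - y))"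
proof (rule lborel_pair.Fubini_integrable)
  have J_nonneg: "0 \<le> J \<eta>" for \<eta>
    using k_le[of \<eta> 0] norm_ge_zero order_trans by blast
  have [measurable]: "\<phi> \<in> borel_measurable borel"
    using \<phi>i by auto
  have "(\<lambda>p. (fst p, x - snd p)) \<in> (lborel \<Otimes>\<^sub>M lborel) \<rightarrow>\<^sub>M (lborel \<Otimes>\<^sub>M lborel)"
    by (intro measurable_Pair) auto
  from measurable_compose[OF this k]
  have [measurable]: "(\<lambda>(\<eta>, y). k \<eta> (x - y)) \<in> borel_measurable (lborel \<Otimes>\<^sub>M lborel)"
    by (simp add: split_beta')
  show "(\<lambda>(\<eta>, y). \<phi> y * k \<eta> (x - y)) \<in> borel_measurable (lborel \<Otimes>\<^sub>M lborel)"
    by measurable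
  have int_y: "integrable lborel (\<lambda>y. \<phi> y * k \<eta> (x - y))" for \<eta>
    by (rule Bochner_Integration.integrable_bound[OF integrable_mult_left[OF integrable_norm[OF \<phi>i], of "J \<eta>"]])
       (use k_le J_nonneg \<phi>i in \<open>auto simp: norm_mult abs_mult intro!: mult_left_mono\<close>)
  then show "AE \<eta> in lborel. integrable lborel (\<lambda>y. (\<lambda>(\<eta>, y). \<phi> y * k \<eta> (x - y)) (\<eta>, y))"
    by simp
  have "(LINT y|lborel. norm (\<phi> y * k \<eta> (x - y))) \<le> (LINT y|lborel. norm (\<phi> y) * J \<eta>)" for \<eta>
    using integrable_norm[OF int_y] \<phi>i k_le
    by (intro integral_mono) (auto simp: norm_mult intro!: mult_left_mono)
  then show "integrable lborel (\<lambda>\<eta>. LINT y|lborel. norm ((\<lambda>(\<eta>, y). \<phi> y * k \<eta> (x - y)) (\<eta>, y)))"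
    by (intro Bochner_Integration.integrable_bound[OF integrable_mult_right[OF J, of "LINT y|lborel. norm (\<phi> y)"]])
       (auto intro!: AE_I2 simp: abs_mult abs_of_nonneg[OF J_nonneg], measurable)
qed

lemma iterated_modulated_integral_eq_convolution:
  fixes \<phi> :: "real \<Rightarrow> complex" and W :: "real \<Rightarrow> real \<Rightarrow> complex"
  assumes \<phi>[measurable]: "\<phi> \<in> borel_measurable borel" and \<phi>i: "integrable lborel \<phi>"
    and Wi: "integrable (lborel \<Otimes>\<^sub>M lborel) (\<lambda>(\<eta>, \<xi>). W \<eta> \<xi>)"
  shows "(LINT \<eta>|lborel. LINT \<xi>|lborel. W \<eta> \<xi> * fourier \<phi> (\<xi> + \<eta>) * cis (2 * pi * (\<xi> + \<eta>) * x))
       = (LINT y|lborel. \<phi> y *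
            (LINT \<eta>|lborel. LINT \<xi>|lborel. W \<eta> \<xi> * cis (2 * pi * (\<xi> + \<eta>) * (x - y))))"
proof -
  have [measurable]: "(\<lambda>(\<eta>, \<xi>). W \<eta> \<xi>) \<in> borel_measurable (lborel \<Otimes>\<^sub>M lborel)"
    "fourier \<phi> \<in> borel_measurable borel"
    using Wi borel_measurable_fourier[OF \<phi>] by auto
  define I where "I \<eta> z = (LINT \<xi>|lborel. W \<eta> \<xi> * cis (2 * pi * (\<xi> + \<eta>) * z))" for \<eta> z
  define J where "J \<eta> = (LINT \<xi>|lborel. norm (W \<eta> \<xi>))" for \<eta>
  have J: "integrable lborel J"
    unfolding J_def by (rule integrable_iterated_norm[OF Wi])
  have I_le: "norm (I \<eta> z) \<le> J \<eta>" for \<eta> z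
    unfolding I_def J_def by (rule norm_integral_modulated_le)
  have "AE \<eta> in lborel. integrable lborel (W \<eta>)"
    using lborel_pair.AE_integrable_fst'[OF Wi] by simp
  then have "AE \<eta> in lborel.
      (LINT \<xi>|lborel. W \<eta> \<xi> * fourier \<phi> (\<xi> + \<eta>) * cis (2 * pi * (\<xi> + \<eta>) * x))
        = (LINT y|lborel. \<phi> y * I \<eta> (x - y))"
    by eventually_elim (simp add: I_def integral_modulated_eq_convolution[OF \<phi> \<phi>i])
  then have "(LINT \<eta>|lborel. LINT \<xi>|lborel. W \<eta> \<xi> * fourier \<phi> (\<xi> + \<eta>) * cis (2 * pi * (\<xi> + \<eta>) * x))
      = (LINT \<eta>|lborel. LINT y|lborel. \<phi> y * I \<eta> (x - y))"
    by (intro integral_cong_AE) (simp_all add: I_def, measurable)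
  also have "\<dots> = (LINT y|lborel. LINT \<eta>|lborel. \<phi> y * I \<eta> (x - y))"
  proof -
    have "(\<lambda>(\<eta>, z). I \<eta> z) \<in> borel_measurable (lborel \<Otimes>\<^sub>M lborel)"
      unfolding I_def by measurable
    from integrable_pair_convolution[OF \<phi>i this J I_le, where x=x] show ?thesis
      using lborel_pair.Fubini_integral by force
  qed
  finally show ?thesis
    by (simp add: I_def)
qed

lemma Lp_norm_bilin_op_fourier_multiplier_le:
  fixes \<phi> :: "real \<Rightarrow> complex" and m :: "real \<times> real \<Rightarrow> complex"
  assumes \<phi>[measurable]: "\<phi> \<in> borel_measurable borel" and \<phi>i: "integrable lborel \<phi>"
    and m[measurable]: "m \<in> borel_measurable borel"
    and m_loc: "\<And>K. compact K \<Longrightarrow> set_integrable lborel K m"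
    and f: "f \<in> classP" and g: "g \<in> classP" and p: "1 \<le> p"
  shows "Lp_norm p (bilin_op (\<lambda>(\<xi>, \<eta>). m (\<xi>, \<eta>) * fourier \<phi> (\<xi> + \<eta>)) f g)
     \<le> ennreal (LINT y|lborel. norm (\<phi> y)) * Lp_norm p (bilin_op m f g)"
proof -
  have [measurable]: "fourier f \<in> borel_measurable borel" "fourier g \<in> borel_measurable borel"
    "fourier \<phi> \<in> borel_measurable borel"
    using f g by (simp_all add: borel_measurable_fourier_classP borel_measurable_fourier)
  define W where "W \<eta> \<xi> = fourier f \<xi> * fourier g \<eta> * m (\<xi>, \<eta>)" for \<eta> \<xi>
  define h where "h z = (LINT \<eta>|lborel. LINT \<xi>|lborel. W \<eta> \<xi> * cis (2 * pi * (\<xi> + \<eta>) * z))" for z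
  have Wi: "integrable (lborel \<Otimes>\<^sub>M lborel) (\<lambda>(\<eta>, \<xi>). W \<eta> \<xi>)"
    unfolding W_def by (rule integrable_fourier_tensor_multiplier[OF f g m m_loc])
  have B_m: "bilin_op m f g = h"
    by (rule ext, subst bilin_op_eq_lborel[OF f g m]) (simp_all add: h_def W_def)
  have B_m\<phi>: "bilin_op (\<lambda>(\<xi>, \<eta>). m (\<xi>, \<eta>) * fourier \<phi> (\<xi> + \<eta>)) f g
      = (\<lambda>x. LINT y|lborel. \<phi> y * h (x - y))"
  proof
    fix x
    have "bilin_op (\<lambda>(\<xi>, \<eta>). m (\<xi>, \<eta>) * fourier \<phi> (\<xi> + \<eta>)) f g x
        = (LINT \<eta>|lborel. LINT \<xi>|lborel. W \<eta> \<xi> * fourier \<phi> (\<xi> + \<eta>) * cis (2 * pi * (\<xi> + \<eta>) * x))"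
      by (subst bilin_op_eq_lborel[OF f g, where m'="\<lambda>p. m p * fourier \<phi> (fst p + snd p)"])
         (simp_all add: W_def mult_ac, measurable)
    then show "bilin_op (\<lambda>(\<xi>, \<eta>). m (\<xi>, \<eta>) * fourier \<phi> (\<xi> + \<eta>)) f g x
        = (LINT y|lborel. \<phi> y * h (x - y))"
      by (simp add: iterated_modulated_integral_eq_convolution[OF \<phi> \<phi>i Wi] h_def)
  qed
  have "h \<in> borel_measurable borel"
    unfolding h_def W_def by measurable
  moreover have "norm (h z) \<le> (LINT \<eta>|lborel. LINT \<xi>|lborel. norm (W \<eta> \<xi>))" for z
    unfolding h_def by (rule norm_iterated_modulated_integral_le[OF Wi])
  ultimately show ?thesis
    unfolding B_m B_m\<phi> by (rule Lp_norm_convolution_le[OF \<phi>i _ _ p])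
qed

lemma bilin_op_cong_AE:
  fixes m m' :: "real \<times> real \<Rightarrow> complex"
  assumes f: "f \<in> classP" and g: "g \<in> classP" and m': "m' \<in> borel_measurable borel"
    and ae: "AE \<eta> in lborel. AE \<xi> in lborel. m (\<xi>, \<eta>) = m' (\<xi>, \<eta>)"
  shows "bilin_op m f g = bilin_op m' f g"
  using bilin_op_eq_lborel[OF f g m' ae] bilin_op_eq_lborel[OF f g m', of m'] by auto

lemma bm_bound_mono:
  "bm_bound p1 p2 p3 m C \<Longrightarrow> C \<le> C' \<Longrightarrow> bm_bound p1 p2 p3 m C'"
  unfolding bm_bound_def by (meson ennreal_leI mult_right_mono order_trans zero_le)

lemma bm_norm_le_scaled:
  assumes N: "0 \<le> N" and bounded: "\<exists>C. bm_bound p1 p2 p3 m' C"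
    and scaled: "\<And>C. bm_bound p1 p2 p3 m' C \<Longrightarrow> bm_bound p1 p2 p3 m (N * C)"
  shows "bm_norm p1 p2 p3 m \<le> N * bm_norm p1 p2 p3 m'"
proof -
  define S where "S = {C. C \<ge> 0 \<and> bm_bound p1 p2 p3 m' C}"
  obtain C where "bm_bound p1 p2 p3 m' C" using bounded by blast
  then have "max C 0 \<in> S" by (auto simp: S_def intro: bm_bound_mono)
  then have "S \<noteq> {}" by blast
  have le: "bm_norm p1 p2 p3 m \<le> N * C" if "C \<in> S" for C
    unfolding bm_norm_def
    by (rule cInf_lower) (use that N scaled in \<open>auto simp: S_def bdd_below_def\<close>)
  show ?thesis
  proof (cases "N = 0")
    case True
    then show ?thesis using le[OF \<open>max C 0 \<in> S\<close>] by simp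
  next
    case False
    with N have "0 < N" by simp
    have "bm_norm p1 p2 p3 m / N \<le> Inf S"
      by (rule cInf_greatest[OF \<open>S \<noteq> {}\<close>]) (use le \<open>0 < N\<close> in \<open>auto simp: divide_le_eq mult.commute\<close>)
    then show ?thesis
      using \<open>0 < N\<close> by (simp add: bm_norm_def S_def divide_le_eq mult.commute)
  qed
qed

lemma loc_int2_mult_bounded:
  assumes m: "loc_int2 m" and b: "b \<in> borel_measurable lebesgue" and B: "\<And>p. norm (b p) \<le> B"
  shows "loc_int2 (\<lambda>p. m p * b p)"
  unfolding loc_int2_def
proof safe
  show mb: "(\<lambda>p. m p * b p) \<in> borel_measurable lebesgue"
    using m b by (simp add: loc_int2_def borel_measurable_times)
  fix K :: "(real \<times> real) set"
  assume K: "compact K"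
  have "integrable lebesgue (\<lambda>p. indicator K p *\<^sub>R m p)"
    using m K by (simp add: loc_int2_def set_integrable_def)
  from integrable_scaleR_right[OF this, of B]
  show "set_integrable lebesgue K (\<lambda>p. m p * b p)"
    unfolding set_integrable_def
  proof (rule Bochner_Integration.integrable_bound)
    have "K \<in> sets lebesgue" using lmeasurable_compact[OF K] by (simp add: fmeasurable_def)
    then show "(\<lambda>p. indicator K p *\<^sub>R (m p * b p)) \<in> borel_measurable lebesgue"
      using mb by measurable
    have "0 \<le> B" using B[of 0] norm_ge_zero order_trans by blast
    then show "AE p in lebesgue. norm (indicator K p *\<^sub>R (m p * b p)) \<le> norm (B *\<^sub>R (indicator K p *\<^sub>R m p))"
      using B by (intro AE_I2) (auto simp: indicator_def norm_mult mult.commute[of B] intro!: mult_left_mono)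
  qed
qed

lemma loc_int2_fourier_multiplier:
  fixes m :: "real \<times> real \<Rightarrow> complex"
  assumes m: "loc_int2 m" and \<phi>: "integrable lebesgue \<phi>"
  shows "loc_int2 (\<lambda>(\<xi>, \<eta>). m (\<xi>, \<eta>) * fourier \<phi> (\<xi> + \<eta>))"
proof -
  obtain \<psi> where "\<psi> \<in> borel_measurable lborel" and "AE x in lborel. \<phi> x = \<psi> x"
    using completion_integrable_ex_borel[OF \<phi>] .
  then have "fourier \<phi> = fourier \<psi>"
    by (intro fourier_cong_AE) simp_all
  then have "fourier \<phi> \<in> borel_measurable borel"
    using borel_measurable_fourier[of \<psi>] \<open>\<psi> \<in> borel_measurable lborel\<close> by simp
  then have "(\<lambda>p::real \<times> real. fourier \<phi> (fst p + snd p)) \<in> borel_measurable borel"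
    by measurable
  then have "(\<lambda>p::real \<times> real. fourier \<phi> (fst p + snd p)) \<in> borel_measurable lebesgue"
    using measurable_completion[of _ lborel] by simp
  from loc_int2_mult_bounded[OF m this norm_fourier_le] show ?thesis
    by (simp add: case_prod_beta')
qed

text \<open>The data are only Lebesgue measurable, while Fubini is available on \<open>lborel \<Otimes>\<^sub>M lborel\<close>;
  hence the passage to Borel representatives of \<open>\<phi>\<close> and \<open>m\<close>.\<close>
lemma bm_bound_fourier_multiplier:
  fixes m :: "real \<times> real \<Rightarrow> complex"
  assumes m: "loc_int2 m" and \<phi>: "integrable lebesgue \<phi>" and p3: "1 \<le> p3"
    and bound: "bm_bound p1 p2 p3 m C"
  shows "bm_bound p1 p2 p3 (\<lambda>(\<xi>, \<eta>). m (\<xi>, \<eta>) * fourier \<phi> (\<xi> + \<eta>)) ((LINT x|lebesgue. norm (\<phi> x)) * C)"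
proof -
  obtain \<psi> where \<psi>l: "\<psi> \<in> borel_measurable lborel" and \<psi>i: "integrable lborel \<psi>"
    and \<phi>\<psi>: "AE x in lborel. \<phi> x = \<psi> x"
    using completion_integrable_ex_borel[OF \<phi>] .
  have \<psi>[measurable]: "\<psi> \<in> borel_measurable borel" using \<psi>l by simp
  obtain mb where mb[measurable]: "mb \<in> borel_measurable borel"
    and mb_loc: "\<And>K. compact K \<Longrightarrow> set_integrable lborel K mb"
    and m_mb: "AE \<eta> in lborel. AE \<xi> in lborel. m (\<xi>, \<eta>) = mb (\<xi>, \<eta>)"
    using loc_int2_ex_borel[OF m] by blast
  have N: "(LINT x|lebesgue. norm (\<phi> x)) = (LINT x|lborel. norm (\<psi> x))"
    by (rule integral_completion_AE_eq) (use \<phi>\<psi> in \<open>auto elim: eventually_mono\<close>)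
  have [measurable]: "fourier \<psi> \<in> borel_measurable borel"
    by (rule borel_measurable_fourier[OF \<psi>])
  show ?thesis
    unfolding bm_bound_def
  proof (intro ballI)
    fix f g assume f: "f \<in> classP" and g: "g \<in> classP"
    have "bilin_op (\<lambda>(\<xi>, \<eta>). m (\<xi>, \<eta>) * fourier \<phi> (\<xi> + \<eta>)) f g
        = bilin_op (\<lambda>(\<xi>, \<eta>). mb (\<xi>, \<eta>) * fourier \<psi> (\<xi> + \<eta>)) f g"
      by (rule bilin_op_cong_AE[OF f g])
         (use m_mb fourier_cong_AE[OF \<phi>\<psi> \<psi>] in \<open>auto elim!: eventually_mono simp: split_beta'\<close>)
    then have "Lp_norm p3 (bilin_op (\<lambda>(\<xi>, \<eta>). m (\<xi>, \<eta>) * fourier \<phi> (\<xi> + \<eta>)) f g)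
        \<le> ennreal (LINT x|lebesgue. norm (\<phi> x)) * Lp_norm p3 (bilin_op mb f g)"
      using Lp_norm_bilin_op_fourier_multiplier_le[OF \<psi> \<psi>i mb mb_loc f g p3] by (simp add: N)
    also have "bilin_op mb f g = bilin_op m f g"
      by (rule bilin_op_cong_AE[OF f g mb m_mb, symmetric])
    also have "ennreal (LINT x|lebesgue. norm (\<phi> x)) * Lp_norm p3 (bilin_op m f g)
        \<le> ennreal (LINT x|lebesgue. norm (\<phi> x)) * (ennreal C * Lp_norm p1 f * Lp_norm p2 g)"
      using bound f g unfolding bm_bound_def by (intro mult_left_mono) auto
    finally show "Lp_norm p3 (bilin_op (\<lambda>(\<xi>, \<eta>). m (\<xi>, \<eta>) * fourier \<phi> (\<xi> + \<eta>)) f g)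
        \<le> ennreal ((LINT x|lebesgue. norm (\<phi> x)) * C) * Lp_norm p1 f * Lp_norm p2 g"
      by (simp add: ennreal_mult' mult.assoc)
  qed
qed

lemma BM_fourier_multiplier:
  fixes m :: "real \<times> real \<Rightarrow> complex"
  assumes m: "m \<in> BM p1 p2 p3" and \<phi>: "integrable lebesgue \<phi>" and p3: "1 \<le> p3"
  shows "(\<lambda>(\<xi>, \<eta>). m (\<xi>, \<eta>) * fourier \<phi> (\<xi> + \<eta>)) \<in> BM p1 p2 p3 \<and>
    bm_norm p1 p2 p3 (\<lambda>(\<xi>, \<eta>). m (\<xi>, \<eta>) * fourier \<phi> (\<xi> + \<eta>))
      \<le> (LINT x|lebesgue. norm (\<phi> x)) * bm_norm p1 p2 p3 m"
proof -
  have loc: "loc_int2 m" and bounded: "\<exists>C. bm_bound p1 p2 p3 m C"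
    using m by (auto simp: BM_def)
  have scaled: "bm_bound p1 p2 p3 (\<lambda>(\<xi>, \<eta>). m (\<xi>, \<eta>) * fourier \<phi> (\<xi> + \<eta>)) ((LINT x|lebesgue. norm (\<phi> x)) * C)"
    if "bm_bound p1 p2 p3 m C" for C
    by (rule bm_bound_fourier_multiplier[OF loc \<phi> p3 that])
  show ?thesis
    using loc_int2_fourier_multiplier[OF loc \<phi>] scaled bounded bm_norm_le_scaled[OF _ bounded scaled]
    by (auto simp: BM_def)
qed

theorem mainTheorem9:
  fixes p1 p2 p3 :: ennreal and \<phi> :: "real \<Rightarrow> complex" and M :: "real \<Rightarrow> complex"
  assumes "1 \<le> p1" and "1 \<le> p2" and "1 \<le> p3"
    and "integrable lebesgue \<phi>"
    and "M \<in> Mtilde p1 p2 p3"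
  shows "(\<lambda>(\<xi>, \<eta>). M (\<xi> - \<eta>) * fourier \<phi> (\<xi> + \<eta>)) \<in> BM p1 p2 p3 \<and>
         bm_norm p1 p2 p3 (\<lambda>(\<xi>, \<eta>). M (\<xi> - \<eta>) * fourier \<phi> (\<xi> + \<eta>))
           \<le> (LINT x|lebesgue. norm (\<phi> x)) * mtilde_norm p1 p2 p3 M"
proof -
  have "(\<lambda>(\<xi>, \<eta>). M (\<xi> - \<eta>)) \<in> BM p1 p2 p3"
    using assms(5) by (simp add: Mtilde_def)
  from BM_fourier_multiplier[OF this assms(4,3)] show ?thesis
    by (simp add: mtilde_norm_def)
qed

end
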